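(* If a uniform preorder $(A,R)$ is cartesian, then $D(A,R)$ is cartesian, the singleton map $\eta:(A,R)\to D(A,R)$, $a\mapsto\{a\}$, is a cartesian morphism, and $\mathsf{fam}(D(A,R))$ is an indexed frame.
   Context: A uniform preorder is a pair $(A,R)$ with $A$ a set and $R\subseteq P(A\times A)$ such that $\mathrm{id}_A\in R$, $s\circ r\in R$ whenever $r,s\in R$, and $s\in R$ whenever $r\in R$ and $s\subseteq r$. A monotone map $f:(A,R)\to(B,S)$ is a function with $\{(fa,fa')\mid(a,a')\in r\}\in S$ for all $r\in R$; for monotone $f,g$, $f\le g$ iff $\{(fa,ga)\mid a\in A\}\in S$. This gives a locally ordered category $\mathsf{UOrd}$ with finite 2-products (terminal: a singleton; product $(A\times B,R\otimes S)$ where $R\otimes S$ consists of relations contained in some $r\times s$, $r\in R,s\in S$). Adjunction $f\dashv g$ means $\mathrm{id}\le g\circ f$ and $f\circ g\le\mathrm{id}$. An object is cartesian if the terminal projection and diagonal have right adjoints $\top:1\to A$ and $\wedge:A\times A\to A$; a morphism $f$ between cartesian objects is cartesian if $f\circ\wedge\cong\wedge\circ(f\times f)$ and $f\circ\top\cong\top$. $D(A,R)=(PA,DR)$ with $PA$ the powerset and $DR$ the relations on $PA$ contained in some $[r]=\{(U,V)\mid\forall a\in U\,\exists b\in V.\,(a,b)\in r\}$, $r\in R$. $\mathsf{fam}(A,R)$ is the indexed preorder (pseudofunctor $\mathsf{Set}^{op}\to\mathsf{Ord}$) $I\mapsto(A^I,\le)$ with $\varphi\le\psi$ iff $\{(\varphi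 i,\psi i)\mid i\in I\}\in R$, reindexing by precomposition. An indexed frame is an indexed preorder $\mathcal{H}$ whose fibers have finite meets preserved by reindexing, which has existential quantification (left adjoints $\exists_u\dashv u^*$ satisfying the Beck–Chevalley condition for pullbacks in $\mathsf{Set}$), and which satisfies Frobenius: $\varphi\wedge\exists_u\psi\cong\exists_u(u^*\varphi\wedge\psi)$ for all $u:J\to I$, $\varphi\in\mathcal{H}(I)$, $\psi\in\mathcal{H}(J)$. *)

theory Defs
  imports Main
begin

text \<open>A uniform preorder is a carrier set A together with a set R of relations on A.
  Relation composition s \<circ> r (first r, then s) is written r O s in HOL.\<close>

definition uniform_preorder :: "'a set \<Rightarrow> ('a \<times> 'a) set set \<Rightarrow> bool" where
  "uniform_preorder A R \<longleftrightarrow>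
     R \<subseteq> Pow (A \<times> A) \<and> Id_on A \<in> R \<and>
     (\<forall>r\<in>R. \<forall>s\<in>R. r O s \<in> R) \<and>
     (\<forall>r\<in>R. \<forall>s. s \<subseteq> r \<longrightarrow> s \<in> R)"

definition monotone_map :: "'a set \<Rightarrow> ('a \<times> 'a) set set \<Rightarrow> 'b set \<Rightarrow> ('b \<times> 'b) set set \<Rightarrow> ('a \<Rightarrow> 'b) \<Rightarrow> bool" where
  "monotone_map A R B S f \<longleftrightarrow>
     (\<forall>a\<in>A. f a \<in> B) \<and> (\<forall>r\<in>R. {(f a, f a') | a a'. (a, a') \<in> r} \<in> S)"

definition map_le :: "'a set \<Rightarrow> ('b \<times> 'b) set set \<Rightarrow> ('a \<Rightarrow> 'b) \<Rightarrow> ('a \<Rightarrow> 'b) \<Rightarrow> bool" where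
  "map_le A S f g \<longleftrightarrow> {(f a, g a) | a. a \<in> A} \<in> S"

definition map_iso :: "'a set \<Rightarrow> ('b \<times> 'b) set set \<Rightarrow> ('a \<Rightarrow> 'b) \<Rightarrow> ('a \<Rightarrow> 'b) \<Rightarrow> bool" where
  "map_iso A S f g \<longleftrightarrow> map_le A S f g \<and> map_le A S g f"

definition adjunction :: "'a set \<Rightarrow> ('a \<times> 'a) set set \<Rightarrow> 'b set \<Rightarrow> ('b \<times> 'b) set set
     \<Rightarrow> ('a \<Rightarrow> 'b) \<Rightarrow> ('b \<Rightarrow> 'a) \<Rightarrow> bool" where
  "adjunction A R B S f g \<longleftrightarrow>
     monotone_map A R B S f \<and> monotone_map B S A R g \<and>
     map_le A R (\<lambda>a. a) (g \<circ> f) \<and> map_le B S (f \<circ> g) (\<lambda>b. b)"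

definition one_set :: "unit set" where "one_set = {()}"
definition one_rel :: "(unit \<times> unit) set set" where "one_rel = Pow {((), ())}"

definition rel_times :: "('a \<times> 'a) set \<Rightarrow> ('b \<times> 'b) set \<Rightarrow> (('a \<times> 'b) \<times> ('a \<times> 'b)) set" where
  "rel_times r s = {((a, b), (a', b')) | a b a' b'. (a, a') \<in> r \<and> (b, b') \<in> s}"

definition prod_rel :: "('a \<times> 'a) set set \<Rightarrow> ('b \<times> 'b) set set \<Rightarrow> (('a \<times> 'b) \<times> ('a \<times> 'b)) set set" where
  "prod_rel R S = {t. \<exists>r\<in>R. \<exists>s\<in>S. t \<subseteq> rel_times r s}"

definition cartesian_with :: "'a set \<Rightarrow> ('a \<times> 'a) set set \<Rightarrow> (unit \<Rightarrow> 'a) \<Rightarrow> ('a \<times> 'a \<Rightarrow> 'a) \<Rightarrow> bool" where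
  "cartesian_with A R tp mt \<longleftrightarrow>
     adjunction A R one_set one_rel (\<lambda>_. ()) tp \<and>
     adjunction A R (A \<times> A) (prod_rel R R) (\<lambda>a. (a, a)) mt"

definition cartesian :: "'a set \<Rightarrow> ('a \<times> 'a) set set \<Rightarrow> bool" where
  "cartesian A R \<longleftrightarrow> uniform_preorder A R \<and> (\<exists>tp mt. cartesian_with A R tp mt)"

text \<open>Cartesian morphism (right adjoints are unique up to isomorphism, so we require
  the conditions for all choices of them).\<close>
definition cartesian_mor :: "'a set \<Rightarrow> ('a \<times> 'a) set set \<Rightarrow> 'b set \<Rightarrow> ('b \<times> 'b) set set \<Rightarrow> ('a \<Rightarrow> 'b) \<Rightarrow> bool" where
  "cartesian_mor A R B S f \<longleftrightarrow>
     cartesian A R \<and> cartesian B S \<and> monotone_map A R B S f \<and>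
     (\<forall>tA mA tB mB. cartesian_with A R tA mA \<and> cartesian_with B S tB mB \<longrightarrow>
        map_iso (A \<times> A) S (f \<circ> mA) (mB \<circ> map_prod f f) \<and>
        map_iso one_set S (f \<circ> tA) tB)"

definition lift_rel :: "'a set \<Rightarrow> ('a \<times> 'a) set \<Rightarrow> ('a set \<times> 'a set) set" where
  "lift_rel A r = {(U, V). U \<subseteq> A \<and> V \<subseteq> A \<and> (\<forall>a\<in>U. \<exists>b\<in>V. (a, b) \<in> r)}"

definition DR :: "'a set \<Rightarrow> ('a \<times> 'a) set set \<Rightarrow> ('a set \<times> 'a set) set set" where
  "DR A R = {t. \<exists>r\<in>R. t \<subseteq> lift_rel A r}"

text \<open>Fiber over an index set I: families I \<rightarrow> B; order as in the paper; reindexing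
  along u : J \<rightarrow> I is precomposition \<phi> \<circ> u.\<close>
definition fam_el :: "'b set \<Rightarrow> 'i set \<Rightarrow> ('i \<Rightarrow> 'b) \<Rightarrow> bool" where
  "fam_el B I \<phi> \<longleftrightarrow> (\<forall>i\<in>I. \<phi> i \<in> B)"

definition fam_le :: "('b \<times> 'b) set set \<Rightarrow> 'i set \<Rightarrow> ('i \<Rightarrow> 'b) \<Rightarrow> ('i \<Rightarrow> 'b) \<Rightarrow> bool" where
  "fam_le S I \<phi> \<psi> \<longleftrightarrow> {(\<phi> i, \<psi> i) | i. i \<in> I} \<in> S"

definition fam_iso :: "('b \<times> 'b) set set \<Rightarrow> 'i set \<Rightarrow> ('i \<Rightarrow> 'b) \<Rightarrow> ('i \<Rightarrow> 'b) \<Rightarrow> bool" where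
  "fam_iso S I \<phi> \<psi> \<longleftrightarrow> fam_le S I \<phi> \<psi> \<and> fam_le S I \<psi> \<phi>"

definition maps_into :: "('j \<Rightarrow> 'i) \<Rightarrow> 'j set \<Rightarrow> 'i set \<Rightarrow> bool" where
  "maps_into u J I \<longleftrightarrow> (\<forall>j\<in>J. u j \<in> I)"

definition is_fam_top :: "'b set \<Rightarrow> ('b \<times> 'b) set set \<Rightarrow> 'i set \<Rightarrow> ('i \<Rightarrow> 'b) \<Rightarrow> bool" where
  "is_fam_top B S I t \<longleftrightarrow> fam_el B I t \<and> (\<forall>\<phi>. fam_el B I \<phi> \<longrightarrow> fam_le S I \<phi> t)"

definition is_fam_meet :: "'b set \<Rightarrow> ('b \<times> 'b) set set \<Rightarrow> 'i set \<Rightarrow> ('i \<Rightarrow> 'b) \<Rightarrow> ('i \<Rightarrow> 'b) \<Rightarrow> ('i \<Rightarrow> 'b) \<Rightarrow> bool" where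
  "is_fam_meet B S I \<phi> \<psi> m \<longleftrightarrow>
     fam_el B I m \<and> fam_le S I m \<phi> \<and> fam_le S I m \<psi> \<and>
     (\<forall>\<chi>. fam_el B I \<chi> \<and> fam_le S I \<chi> \<phi> \<and> fam_le S I \<chi> \<psi> \<longrightarrow> fam_le S I \<chi> m)"

definition is_fam_exists :: "'b set \<Rightarrow> ('b \<times> 'b) set set \<Rightarrow> 'j set \<Rightarrow> 'i set \<Rightarrow> ('j \<Rightarrow> 'i)
     \<Rightarrow> ('j \<Rightarrow> 'b) \<Rightarrow> ('i \<Rightarrow> 'b) \<Rightarrow> bool" where
  "is_fam_exists B S J I u \<psi> e \<longleftrightarrow>
     fam_el B I e \<and> (\<forall>\<phi>. fam_el B I \<phi> \<longrightarrow> (fam_le S I e \<phi> \<longleftrightarrow> fam_le S J \<psi> (\<phi> \<circ> u)))"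

text \<open>fam(B,S) is an indexed frame; index sets range over sets of the (arbitrary)
  types 'i, 'j, 'k, 'p.\<close>
definition fam_indexed_frame :: "'b set \<Rightarrow> ('b \<times> 'b) set set
     \<Rightarrow> 'i itself \<Rightarrow> 'j itself \<Rightarrow> 'k itself \<Rightarrow> 'p itself \<Rightarrow> bool" where
  "fam_indexed_frame B S (_::'i itself) (_::'j itself) (_::'k itself) (_::'p itself) \<longleftrightarrow>
     \<comment> \<open>fibers have finite meets\<close>
     (\<forall>I::'i set. (\<exists>t. is_fam_top B S I t) \<and>
        (\<forall>\<phi> \<psi>. fam_el B I \<phi> \<and> fam_el B I \<psi> \<longrightarrow> (\<exists>m. is_fam_meet B S I \<phi> \<psi> m))) \<and>
     \<comment> \<open>finite meets are preserved by reindexing\<close>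
     (\<forall>(I::'i set) (J::'j set) u. maps_into u J I \<longrightarrow>
        (\<forall>t. is_fam_top B S I t \<longrightarrow> is_fam_top B S J (t \<circ> u)) \<and>
        (\<forall>\<phi> \<psi> m. fam_el B I \<phi> \<and> fam_el B I \<psi> \<and> is_fam_meet B S I \<phi> \<psi> m \<longrightarrow>
            is_fam_meet B S J (\<phi> \<circ> u) (\<psi> \<circ> u) (m \<circ> u))) \<and>
     \<comment> \<open>existential quantification: left adjoints to reindexing\<close>
     (\<forall>(I::'i set) (J::'j set) u \<psi>. maps_into u J I \<and> fam_el B J \<psi> \<longrightarrow>
        (\<exists>e. is_fam_exists B S J I u \<psi> e)) \<and>
     \<comment> \<open>Beck-Chevalley for every pullback square P \<rightarrow> J, P \<rightarrow> K over u : J \<rightarrow> I, v : K \<rightarrow> I\<close>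
     (\<forall>(I::'i set) (J::'j set) (K::'k set) (P::'p set) u v p q.
        maps_into u J I \<and> maps_into v K I \<and> maps_into p P J \<and> maps_into q P K \<and>
        (\<forall>x\<in>P. u (p x) = v (q x)) \<and>
        bij_betw (\<lambda>x. (p x, q x)) P {(j, k). j \<in> J \<and> k \<in> K \<and> u j = v k} \<longrightarrow>
        (\<forall>\<psi> e e'. fam_el B J \<psi> \<and> is_fam_exists B S J I u \<psi> e \<and>
            is_fam_exists B S P K q (\<psi> \<circ> p) e' \<longrightarrow> fam_iso S K (e \<circ> v) e')) \<and>
     \<comment> \<open>Frobenius\<close>
     (\<forall>(I::'i set) (J::'j set) u \<phi> \<psi> e m m' e'.
        maps_into u J I \<and> fam_el B I \<phi> \<and> fam_el B J \<psi> \<and>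
        is_fam_exists B S J I u \<psi> e \<and> is_fam_meet B S I \<phi> e m \<and>
        is_fam_meet B S J (\<phi> \<circ> u) \<psi> m' \<and> is_fam_exists B S J I u m' e' \<longrightarrow>
        fam_iso S I m e')"

end

theory Submission
  imports Defs
begin

text \<open>
  D(A,R) is the lower powerset: U \<le> V when every element of U lies below some element of V,
  uniformly through one relation of R. Its top is A and its meet is
  U \<and> V = {a \<and> b | a \<in> U, b \<in> V}; they are right adjoints because the relations witnessing
  that \<top> and \<and> are right adjoints in (A,R) lift to D(A,R). Right adjoints are unique up to
  isomorphism, so the singleton map is cartesian as soon as {a} \<and> {b} = {a \<and> b} and
  {\<top>} \<cong> A. In the fibres of fam(D(A,R)) meets are pointwise and \<exists>_u \<psi> is the union of
  \<psi> over the fibres of u. For these choices Beck-Chevalley and Frobenius hold as equalities,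
  the latter because \<and> distributes over unions in D(A,R); every other choice of meets and
  quantifiers is isomorphic to these.
\<close>

section \<open>Uniform preorders and the fibres of fam\<close>

lemma fam_el_comp: "maps_into u J I \<Longrightarrow> fam_el B I \<phi> \<Longrightarrow> fam_el B J (\<phi> \<circ> u)"
  unfolding maps_into_def fam_el_def by simp

lemma fam_iso_sym: "fam_iso S I \<phi> \<psi> \<Longrightarrow> fam_iso S I \<psi> \<phi>"
  unfolding fam_iso_def by blast

lemma is_fam_top_unique: "is_fam_top B S I t \<Longrightarrow> is_fam_top B S I t' \<Longrightarrow> fam_iso S I t t'"
  unfolding is_fam_top_def fam_iso_def by blast

lemma is_fam_meet_unique:
  "is_fam_meet B S I \<phi> \<psi> m \<Longrightarrow> is_fam_meet B S I \<phi> \<psi> m' \<Longrightarrow> fam_iso S I m m'"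
  unfolding is_fam_meet_def fam_iso_def by blast

context
  fixes B :: "'b set" and S :: "('b \<times> 'b) set set"
  assumes up: "uniform_preorder B S"
begin

lemma uniform_preorder_subset: "r \<in> S \<Longrightarrow> s \<subseteq> r \<Longrightarrow> s \<in> S"
  using up unfolding uniform_preorder_def by blast

lemma uniform_preorder_relcomp:
  assumes "r \<in> S" and "s \<in> S" and "t \<subseteq> r O s"
  shows "t \<in> S"
proof (rule uniform_preorder_subset)
  show "r O s \<in> S"
    using up assms(1,2) unfolding uniform_preorder_def by (elim conjE) (drule (1) bspec, drule (1) bspec)
qed fact

lemma uniform_preorder_Id_on: "Id_on B \<in> S"
  using up unfolding uniform_preorder_def by blast

lemma uniform_preorder_field: "r \<in> S \<Longrightarrow> r \<subseteq> B \<times> B"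
  using up unfolding uniform_preorder_def by (elim conjE) (drule (1) subsetD, simp)

lemma fam_leI: "r \<in> S \<Longrightarrow> (\<And>i. i \<in> I \<Longrightarrow> (\<phi> i, \<psi> i) \<in> r) \<Longrightarrow> fam_le S I \<phi> \<psi>"
  unfolding fam_le_def by (erule uniform_preorder_subset) blast

lemma fam_le_refl: "fam_el B I \<phi> \<Longrightarrow> fam_le S I \<phi> \<phi>"
  unfolding fam_el_def by (rule fam_leI[OF uniform_preorder_Id_on]) blast

lemma fam_le_trans:
  assumes "fam_le S I \<phi> \<psi>" and "fam_le S I \<psi> \<chi>"
  shows "fam_le S I \<phi> \<chi>"
  using assms unfolding fam_le_def by (rule uniform_preorder_relcomp) blast

lemma fam_le_comp:
  assumes "maps_into u J I" and "fam_le S I \<phi> \<psi>"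
  shows "fam_le S J (\<phi> \<circ> u) (\<psi> \<circ> u)"
  using assms(2) unfolding fam_le_def
  by (rule uniform_preorder_subset) (use assms(1) in \<open>auto simp: maps_into_def\<close>)

lemma fam_iso_refl: "fam_el B I \<phi> \<Longrightarrow> fam_iso S I \<phi> \<phi>"
  unfolding fam_iso_def by (simp add: fam_le_refl)

lemma fam_iso_trans: "fam_iso S I \<phi> \<psi> \<Longrightarrow> fam_iso S I \<psi> \<chi> \<Longrightarrow> fam_iso S I \<phi> \<chi>"
  unfolding fam_iso_def by (blast intro: fam_le_trans)

lemma fam_iso_comp: "maps_into u J I \<Longrightarrow> fam_iso S I \<phi> \<psi> \<Longrightarrow> fam_iso S J (\<phi> \<circ> u) (\<psi> \<circ> u)"
  unfolding fam_iso_def by (blast intro: fam_le_comp)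

lemma fam_iso_if_eq_on: "fam_el B I \<phi> \<Longrightarrow> (\<And>i. i \<in> I \<Longrightarrow> \<phi> i = \<psi> i) \<Longrightarrow> fam_iso S I \<phi> \<psi>"
  unfolding fam_iso_def fam_el_def by (auto intro!: fam_leI[OF uniform_preorder_Id_on])

lemma is_fam_top_iso:
  "is_fam_top B S I t \<Longrightarrow> fam_iso S I t t' \<Longrightarrow> fam_el B I t' \<Longrightarrow> is_fam_top B S I t'"
  unfolding is_fam_top_def fam_iso_def by (blast intro: fam_le_trans)

lemma is_fam_meet_iso:
  "is_fam_meet B S I \<phi> \<psi> m \<Longrightarrow> fam_iso S I m m' \<Longrightarrow> fam_el B I m' \<Longrightarrow> is_fam_meet B S I \<phi> \<psi> m'"
  unfolding is_fam_meet_def fam_iso_def by (blast intro: fam_le_trans)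

lemma is_fam_meet_cong:
  assumes "fam_iso S I \<psi> \<psi>'" and "is_fam_meet B S I \<phi> \<psi> m" and "is_fam_meet B S I \<phi> \<psi>' m'"
  shows "fam_iso S I m m'"
  using assms unfolding is_fam_meet_def fam_iso_def by (blast intro: fam_le_trans)

lemma is_fam_exists_unit: "is_fam_exists B S J I u \<psi> e \<Longrightarrow> fam_le S J \<psi> (e \<circ> u)"
  unfolding is_fam_exists_def by (blast intro: fam_le_refl)

lemma is_fam_exists_cong:
  assumes "fam_iso S J \<psi> \<psi>'"
    and e: "is_fam_exists B S J I u \<psi> e" and e': "is_fam_exists B S J I u \<psi>' e'"
  shows "fam_iso S I e e'"
proof -
  have "fam_le S J \<psi> (e' \<circ> u)"
    using assms(1) is_fam_exists_unit[OF e'] unfolding fam_iso_def by (blast intro: fam_le_trans)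
  moreover have "fam_le S J \<psi>' (e \<circ> u)"
    using assms(1) is_fam_exists_unit[OF e] unfolding fam_iso_def by (blast intro: fam_le_trans)
  ultimately show ?thesis
    using e e' unfolding is_fam_exists_def fam_iso_def by blast
qed

end

section \<open>Cartesian uniform preorders\<close>

lemma map_le_eq_fam_le: "map_le A S f g = fam_le S A f g"
  unfolding map_le_def fam_le_def ..

lemma map_iso_eq_fam_iso: "map_iso A S f g = fam_iso S A f g"
  unfolding map_iso_def fam_iso_def map_le_eq_fam_le ..

context
  fixes B :: "'b set" and S :: "('b \<times> 'b) set set" and tp :: "unit \<Rightarrow> 'b" and mt :: "'b \<times> 'b \<Rightarrow> 'b"
  assumes up: "uniform_preorder B S" and cw: "cartesian_with B S tp mt"
begin

lemma cartesian_with_top_in: "tp () \<in> B"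
  and cartesian_with_le_top: "{(a, tp ()) | a. a \<in> B} \<in> S"
  and cartesian_with_meet_in: "a \<in> B \<Longrightarrow> b \<in> B \<Longrightarrow> mt (a, b) \<in> B"
  and cartesian_with_meet_mono: "r \<in> S \<Longrightarrow> s \<in> S \<Longrightarrow>
        {(mt (a, b), mt (a', b')) | a b a' b'. (a, a') \<in> r \<and> (b, b') \<in> s} \<in> S"
  and cartesian_with_le_meet_diag: "{(a, mt (a, a)) | a. a \<in> B} \<in> S"
  and cartesian_with_meet_le_fst: "{(mt (a, b), a) | a b. a \<in> B \<and> b \<in> B} \<in> S"
  and cartesian_with_meet_le_snd: "{(mt (a, b), b) | a b. a \<in> B \<and> b \<in> B} \<in> S"
proof -
  have top: "adjunction B S one_set one_rel (\<lambda>_. ()) tp"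
    and meet: "adjunction B S (B \<times> B) (prod_rel S S) (\<lambda>a. (a, a)) mt"
    using cw unfolding cartesian_with_def by auto
  show "tp () \<in> B"
    using top unfolding adjunction_def monotone_map_def one_set_def by simp
  show "{(a, tp ()) | a. a \<in> B} \<in> S"
    using top unfolding adjunction_def map_le_def by simp
  show "a \<in> B \<Longrightarrow> b \<in> B \<Longrightarrow> mt (a, b) \<in> B"
    using meet unfolding adjunction_def monotone_map_def by simp
  show "{(a, mt (a, a)) | a. a \<in> B} \<in> S"
    using meet unfolding adjunction_def map_le_def by simp
  show "r \<in> S \<Longrightarrow> s \<in> S \<Longrightarrow>
      {(mt (a, b), mt (a', b')) | a b a' b'. (a, a') \<in> r \<and> (b, b') \<in> s} \<in> S"
  proof -
    assume "r \<in> S" "s \<in> S"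
    then have "rel_times r s \<in> prod_rel S S"
      unfolding prod_rel_def by blast
    then have "{(mt p, mt p') | p p'. (p, p') \<in> rel_times r s} \<in> S"
      using meet unfolding adjunction_def monotone_map_def by blast
    moreover have "{(mt p, mt p') | p p'. (p, p') \<in> rel_times r s} =
        {(mt (a, b), mt (a', b')) | a b a' b'. (a, a') \<in> r \<and> (b, b') \<in> s}"
      unfolding rel_times_def by blast
    ultimately show ?thesis by simp
  qed
  have "{((mt p, mt p), p) | p. p \<in> B \<times> B} \<in> prod_rel S S"
    using meet unfolding adjunction_def map_le_def by simp
  then obtain r s where "r \<in> S" "s \<in> S" and counit: "{((mt p, mt p), p) | p. p \<in> B \<times> B} \<subseteq> rel_times r s"
    unfolding prod_rel_def by blast
  show "{(mt (a, b), a) | a b. a \<in> B \<and> b \<in> B} \<in> S"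
    using \<open>r \<in> S\<close> by (rule uniform_preorder_subset[OF up]) (use counit in \<open>auto simp: rel_times_def\<close>)
  show "{(mt (a, b), b) | a b. a \<in> B \<and> b \<in> B} \<in> S"
    using \<open>s \<in> S\<close> by (rule uniform_preorder_subset[OF up]) (use counit in \<open>auto simp: rel_times_def\<close>)
qed

lemma cartesian_with_meet_greatest:
  assumes "r \<in> S" and "s \<in> S"
  shows "{(x, mt (a, b)) | x a b. x \<in> B \<and> (x, a) \<in> r \<and> (x, b) \<in> s} \<in> S"
  using cartesian_with_le_meet_diag cartesian_with_meet_mono[OF assms]
  by (rule uniform_preorder_relcomp[OF up]) blast

lemma is_fam_top_const: "is_fam_top B S I (\<lambda>_. tp ())"
  unfolding is_fam_top_def fam_el_def
  by (auto simp: cartesian_with_top_in intro: fam_leI[OF up cartesian_with_le_top])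

lemma is_fam_meet_pointwise:
  assumes \<phi>: "fam_el B I \<phi>" and \<psi>: "fam_el B I \<psi>"
  shows "is_fam_meet B S I \<phi> \<psi> (\<lambda>i. mt (\<phi> i, \<psi> i))"
  unfolding is_fam_meet_def
proof (intro conjI allI impI)
  show "fam_el B I (\<lambda>i. mt (\<phi> i, \<psi> i))"
    using assms cartesian_with_meet_in unfolding fam_el_def by blast
  show "fam_le S I (\<lambda>i. mt (\<phi> i, \<psi> i)) \<phi>"
    by (rule fam_leI[OF up cartesian_with_meet_le_fst]) (use assms in \<open>auto simp: fam_el_def\<close>)
  show "fam_le S I (\<lambda>i. mt (\<phi> i, \<psi> i)) \<psi>"
    by (rule fam_leI[OF up cartesian_with_meet_le_snd]) (use assms in \<open>auto simp: fam_el_def\<close>)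
  fix \<chi> assume \<chi>: "fam_el B I \<chi> \<and> fam_le S I \<chi> \<phi> \<and> fam_le S I \<chi> \<psi>"
  then have "{(\<chi> i, \<phi> i) | i. i \<in> I} \<in> S" and "{(\<chi> i, \<psi> i) | i. i \<in> I} \<in> S"
    unfolding fam_le_def by blast+
  then show "fam_le S I \<chi> (\<lambda>i. mt (\<phi> i, \<psi> i))"
    by (rule fam_leI[OF up cartesian_with_meet_greatest]) (use \<chi> in \<open>auto simp: fam_el_def\<close>)
qed

lemma is_fam_top_comp:
  assumes "maps_into u J I" and "is_fam_top B S I t"
  shows "is_fam_top B S J (t \<circ> u)"
proof -
  have "fam_iso S J (t \<circ> u) ((\<lambda>_. tp ()) \<circ> u)"
    using assms is_fam_top_unique[OF _ is_fam_top_const] fam_iso_comp[OF up] by blast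
  then have "fam_iso S J (\<lambda>_. tp ()) (t \<circ> u)"
    by (simp add: fam_iso_sym comp_def)
  moreover have "fam_el B J (t \<circ> u)"
    using assms fam_el_comp unfolding is_fam_top_def by blast
  ultimately show ?thesis
    using is_fam_top_iso[OF up is_fam_top_const] by blast
qed

lemma is_fam_meet_comp:
  assumes u: "maps_into u J I" and \<phi>: "fam_el B I \<phi>" and \<psi>: "fam_el B I \<psi>"
    and m: "is_fam_meet B S I \<phi> \<psi> m"
  shows "is_fam_meet B S J (\<phi> \<circ> u) (\<psi> \<circ> u) (m \<circ> u)"
proof -
  have el: "fam_el B J (\<phi> \<circ> u)" "fam_el B J (\<psi> \<circ> u)" "fam_el B J (m \<circ> u)"
    using fam_el_comp[OF u] \<phi> \<psi> m unfolding is_fam_meet_def by blast+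
  have "fam_iso S J ((\<lambda>i. mt (\<phi> i, \<psi> i)) \<circ> u) (m \<circ> u)"
    using fam_iso_comp[OF up u is_fam_meet_unique[OF is_fam_meet_pointwise[OF \<phi> \<psi>] m]] .
  then have "fam_iso S J (\<lambda>j. mt ((\<phi> \<circ> u) j, (\<psi> \<circ> u) j)) (m \<circ> u)"
    by (simp add: comp_def)
  with is_fam_meet_pointwise[OF el(1,2)] show ?thesis
    using is_fam_meet_iso[OF up] el(3) by blast
qed

end

lemma cartesian_with_unique:
  assumes up: "uniform_preorder B S"
    and cw: "cartesian_with B S tp mt" and cw': "cartesian_with B S tp' mt'"
  shows "map_iso one_set S tp tp'" and "map_iso (B \<times> B) S mt mt'"
proof -
  have "fam_iso S one_set (\<lambda>_. tp ()) (\<lambda>_. tp' ())"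
    by (rule is_fam_top_unique[OF is_fam_top_const[OF up cw] is_fam_top_const[OF up cw']])
  moreover have "(\<lambda>_. tp ()) = tp" and "(\<lambda>_. tp' ()) = tp'"
    by auto
  ultimately show "map_iso one_set S tp tp'"
    unfolding map_iso_eq_fam_iso by metis
  have el: "fam_el B (B \<times> B) fst" "fam_el B (B \<times> B) snd"
    unfolding fam_el_def by auto
  have "fam_iso S (B \<times> B) (\<lambda>p. mt (fst p, snd p)) (\<lambda>p. mt' (fst p, snd p))"
    using is_fam_meet_unique[OF is_fam_meet_pointwise[OF up cw el] is_fam_meet_pointwise[OF up cw' el]] .
  then show "map_iso (B \<times> B) S mt mt'"
    by (simp add: map_iso_eq_fam_iso)
qed

lemma cartesian_withI:
  assumes up: "uniform_preorder B S"
    and top_in: "tp () \<in> B"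
    and le_top: "{(a, tp ()) | a. a \<in> B} \<in> S"
    and meet_in: "\<And>a b. a \<in> B \<Longrightarrow> b \<in> B \<Longrightarrow> mt (a, b) \<in> B"
    and meet_mono: "\<And>r s. r \<in> S \<Longrightarrow> s \<in> S \<Longrightarrow>
        {(mt (a, b), mt (a', b')) | a b a' b'. (a, a') \<in> r \<and> (b, b') \<in> s} \<in> S"
    and le_meet_diag: "{(a, mt (a, a)) | a. a \<in> B} \<in> S"
    and meet_le_fst: "{(mt (a, b), a) | a b. a \<in> B \<and> b \<in> B} \<in> S"
    and meet_le_snd: "{(mt (a, b), b) | a b. a \<in> B \<and> b \<in> B} \<in> S"
  shows "cartesian_with B S tp mt"
  unfolding cartesian_with_def
proof
  have "monotone_map one_set one_rel B S tp"
    unfolding monotone_map_def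
  proof (intro conjI ballI)
    fix r assume "r \<in> one_rel"
    then show "{(tp a, tp a') | a a'. (a, a') \<in> r} \<in> S"
      by (intro uniform_preorder_subset[OF up uniform_preorder_Id_on[OF up]])
        (auto simp: one_rel_def top_in)
  qed (simp add: one_set_def top_in)
  then show "adjunction B S one_set one_rel (\<lambda>_. ()) tp"
    using le_top unfolding adjunction_def monotone_map_def map_le_def one_set_def one_rel_def
    by auto
next
  have "monotone_map B S (B \<times> B) (prod_rel S S) (\<lambda>a. (a, a))"
    unfolding monotone_map_def prod_rel_def rel_times_def by blast
  moreover have "monotone_map (B \<times> B) (prod_rel S S) B S mt"
    unfolding monotone_map_def
  proof (intro conjI ballI)
    fix t assume "t \<in> prod_rel S S"
    then obtain r s where "r \<in> S" "s \<in> S" and t: "t \<subseteq> rel_times r s"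
      unfolding prod_rel_def by blast
    from meet_mono[OF this(1,2)] show "{(mt p, mt p') | p p'. (p, p') \<in> t} \<in> S"
      by (rule uniform_preorder_subset[OF up]) (use t in \<open>unfold rel_times_def, blast\<close>)
  qed (auto simp: meet_in)
  moreover have "{(((\<lambda>a. (a, a)) \<circ> mt) p, p) | p. p \<in> B \<times> B}
      \<subseteq> rel_times {(mt (a, b), a) | a b. a \<in> B \<and> b \<in> B} {(mt (a, b), b) | a b. a \<in> B \<and> b \<in> B}"
    unfolding rel_times_def by auto
  then have "map_le (B \<times> B) (prod_rel S S) ((\<lambda>a. (a, a)) \<circ> mt) (\<lambda>p. p)"
    unfolding map_le_def prod_rel_def using meet_le_fst meet_le_snd by blast
  ultimately show "adjunction B S (B \<times> B) (prod_rel S S) (\<lambda>a. (a, a)) mt"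
    using le_meet_diag unfolding adjunction_def map_le_def by simp
qed

section \<open>The lower powerset D(A,R)\<close>

lemma DR_I: "r \<in> R \<Longrightarrow> t \<subseteq> lift_rel A r \<Longrightarrow> t \<in> DR A R"
  unfolding DR_def by blast

lemma lift_rel_relcomp: "lift_rel A r O lift_rel A s \<subseteq> lift_rel A (r O s)"
  unfolding lift_rel_def by blast

lemma subset_in_lift_rel_Id_on: "U \<subseteq> V \<Longrightarrow> V \<subseteq> A \<Longrightarrow> (U, V) \<in> lift_rel A (Id_on A)"
  unfolding lift_rel_def by blast

lemma lift_relI:
  "U \<subseteq> A \<Longrightarrow> V \<subseteq> A \<Longrightarrow> (\<And>a. a \<in> U \<Longrightarrow> \<exists>b\<in>V. (a, b) \<in> r) \<Longrightarrow> (U, V) \<in> lift_rel A r"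
  unfolding lift_rel_def by blast

lemma fam_le_DR_iff: "fam_le (DR A R) I \<phi> \<psi> \<longleftrightarrow> (\<exists>r\<in>R. \<forall>i\<in>I. (\<phi> i, \<psi> i) \<in> lift_rel A r)"
  unfolding fam_le_def DR_def by blast

context
  fixes A :: "'a set" and R :: "('a \<times> 'a) set set"
  assumes up: "uniform_preorder A R"
begin

lemma subset_rel_in_DR: "{(U, V). U \<subseteq> V \<and> V \<subseteq> A} \<in> DR A R"
  by (rule DR_I[OF uniform_preorder_Id_on[OF up]]) (auto intro: subset_in_lift_rel_Id_on)

lemma uniform_preorder_DR: "uniform_preorder (Pow A) (DR A R)"
  unfolding uniform_preorder_def
proof (intro conjI ballI allI impI)
  show "DR A R \<subseteq> Pow (Pow A \<times> Pow A)"
    unfolding DR_def lift_rel_def by blast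
  show "Id_on (Pow A) \<in> DR A R"
    using subset_rel_in_DR unfolding DR_def by blast
  show "t \<in> DR A R" if "t' \<in> DR A R" and "t \<subseteq> t'" for t t'
    using that unfolding DR_def by blast
  fix t t' assume "t \<in> DR A R" and "t' \<in> DR A R"
  then obtain r r' where r: "r \<in> R" "r' \<in> R" and t: "t \<subseteq> lift_rel A r" "t' \<subseteq> lift_rel A r'"
    unfolding DR_def by blast
  have "r O r' \<in> R"
    using uniform_preorder_relcomp[OF up r] by simp
  moreover have "t O t' \<subseteq> lift_rel A (r O r')"
    using t lift_rel_relcomp by blast
  ultimately show "t O t' \<in> DR A R"
    by (rule DR_I)
qed

lemma monotone_map_singleton: "monotone_map A R (Pow A) (DR A R) (\<lambda>a. {a})"
  unfolding monotone_map_def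
proof (intro conjI ballI)
  fix r assume r: "r \<in> R"
  show "{({a}, {a'}) | a a'. (a, a') \<in> r} \<in> DR A R"
    using uniform_preorder_field[OF up r] by (intro DR_I[OF r]) (auto simp: lift_rel_def)
qed simp

end

definition set_meet :: "('a \<times> 'a \<Rightarrow> 'a) \<Rightarrow> 'a set \<times> 'a set \<Rightarrow> 'a set" where
  "set_meet mt UV = mt ` (fst UV \<times> snd UV)"

lemma set_meet_singletons: "set_meet mt ({a}, {b}) = {mt (a, b)}"
  by (simp add: set_meet_def)

context
  fixes A :: "'a set" and R :: "('a \<times> 'a) set set" and tp :: "unit \<Rightarrow> 'a" and mt :: "'a \<times> 'a \<Rightarrow> 'a"
  assumes up: "uniform_preorder A R" and cw: "cartesian_with A R tp mt"
begin

lemma set_meet_subset: "U \<subseteq> A \<Longrightarrow> V \<subseteq> A \<Longrightarrow> set_meet mt (U, V) \<subseteq> A"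
  using cartesian_with_meet_in[OF up cw] unfolding set_meet_def by auto

lemma set_meet_in_lift_rel:
  assumes "(U, U') \<in> lift_rel A r" and "(V, V') \<in> lift_rel A s"
  shows "(set_meet mt (U, V), set_meet mt (U', V'))
    \<in> lift_rel A {(mt (a, b), mt (a', b')) | a b a' b'. (a, a') \<in> r \<and> (b, b') \<in> s}"
proof (rule lift_relI)
  have "U \<subseteq> A" "U' \<subseteq> A" "V \<subseteq> A" "V' \<subseteq> A"
    using assms unfolding lift_rel_def by simp_all
  then show "set_meet mt (U, V) \<subseteq> A" and "set_meet mt (U', V') \<subseteq> A"
    by (simp_all add: set_meet_subset)
  fix x assume "x \<in> set_meet mt (U, V)"
  then obtain a b where x: "x = mt (a, b)" and "a \<in> U" "b \<in> V"
    unfolding set_meet_def by auto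
  then obtain a' b' where "a' \<in> U'" "(a, a') \<in> r" and "b' \<in> V'" "(b, b') \<in> s"
    using assms unfolding lift_rel_def by blast
  then show "\<exists>y\<in>set_meet mt (U', V'). (x, y) \<in> {(mt (a, b), mt (a', b')) | a b a' b'. (a, a') \<in> r \<and> (b, b') \<in> s}"
    unfolding set_meet_def x by force
qed

lemma cartesian_with_DR: "cartesian_with (Pow A) (DR A R) (\<lambda>_. A) (set_meet mt)"
proof (rule cartesian_withI[OF uniform_preorder_DR[OF up]])
  show "\<And>U V. U \<in> Pow A \<Longrightarrow> V \<in> Pow A \<Longrightarrow> set_meet mt (U, V) \<in> Pow A"
    by (simp add: set_meet_subset)
  show "{(U, A) | U. U \<in> Pow A} \<in> DR A R"
    by (rule uniform_preorder_subset[OF uniform_preorder_DR[OF up] subset_rel_in_DR[OF up]]) blast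
  show "{(set_meet mt (U, V), set_meet mt (U', V')) | U V U' V'. (U, U') \<in> t \<and> (V, V') \<in> t'} \<in> DR A R"
    if tt': "t \<in> DR A R" "t' \<in> DR A R" for t t'
  proof -
    obtain r r' where r: "r \<in> R" "r' \<in> R" and t: "t \<subseteq> lift_rel A r" "t' \<subseteq> lift_rel A r'"
      using tt' unfolding DR_def by blast
    show ?thesis
    proof (rule DR_I[OF cartesian_with_meet_mono[OF up cw r]], safe)
      fix U V U' V' assume "(U, U') \<in> t" "(V, V') \<in> t'"
      with t show "(set_meet mt (U, V), set_meet mt (U', V'))
          \<in> lift_rel A {(mt (a, b), mt (a', b')) | a b a' b'. (a, a') \<in> r \<and> (b, b') \<in> r'}"
        by (intro set_meet_in_lift_rel) blast+
    qed
  qed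
  show "{(U, set_meet mt (U, U)) | U. U \<in> Pow A} \<in> DR A R"
  proof (rule DR_I[OF cartesian_with_le_meet_diag[OF up cw]], safe)
    fix U assume "U \<subseteq> A"
    then show "(U, set_meet mt (U, U)) \<in> lift_rel A {(a, mt (a, a)) | a. a \<in> A}"
      by (intro lift_relI) (auto simp: set_meet_subset, auto simp: set_meet_def)
  qed
  show "{(set_meet mt (U, V), U) | U V. U \<in> Pow A \<and> V \<in> Pow A} \<in> DR A R"
  proof (rule DR_I[OF cartesian_with_meet_le_fst[OF up cw]], safe)
    fix U V assume "U \<subseteq> A" "V \<subseteq> A"
    then show "(set_meet mt (U, V), U) \<in> lift_rel A {(mt (a, b), a) | a b. a \<in> A \<and> b \<in> A}"
      by (intro lift_relI) (auto simp: set_meet_subset, auto simp: set_meet_def)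
  qed
  show "{(set_meet mt (U, V), V) | U V. U \<in> Pow A \<and> V \<in> Pow A} \<in> DR A R"
  proof (rule DR_I[OF cartesian_with_meet_le_snd[OF up cw]], safe)
    fix U V assume "U \<subseteq> A" "V \<subseteq> A"
    then show "(set_meet mt (U, V), V) \<in> lift_rel A {(mt (a, b), b) | a b. a \<in> A \<and> b \<in> A}"
      by (intro lift_relI) (auto simp: set_meet_subset, auto simp: set_meet_def)
  qed
qed simp

lemma singleton_preserves_top:
  assumes "cartesian_with (Pow A) (DR A R) tB mB"
  shows "map_iso one_set (DR A R) ((\<lambda>a. {a}) \<circ> tp) tB"
proof -
  have "({tp ()}, A) \<in> lift_rel A (Id_on A)"
    using cartesian_with_top_in[OF up cw] by (simp add: subset_in_lift_rel_Id_on)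
  moreover have "(A, {tp ()}) \<in> lift_rel A {(a, tp ()) | a. a \<in> A}"
    using cartesian_with_top_in[OF up cw] by (auto intro: lift_relI)
  ultimately have "fam_iso (DR A R) one_set ((\<lambda>a. {a}) \<circ> tp) (\<lambda>_. A)"
    unfolding fam_iso_def fam_le_DR_iff one_set_def
    using uniform_preorder_Id_on[OF up] cartesian_with_le_top[OF up cw] by auto
  moreover have "fam_iso (DR A R) one_set (\<lambda>_. A) tB"
    using cartesian_with_unique(1)[OF uniform_preorder_DR[OF up] cartesian_with_DR assms]
    by (simp add: map_iso_eq_fam_iso)
  ultimately show ?thesis
    unfolding map_iso_eq_fam_iso by (rule fam_iso_trans[OF uniform_preorder_DR[OF up]])
qed

lemma singleton_preserves_meet:
  assumes "cartesian_with (Pow A) (DR A R) tB mB"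
  shows "map_iso (A \<times> A) (DR A R) ((\<lambda>a. {a}) \<circ> mt) (mB \<circ> map_prod (\<lambda>a. {a}) (\<lambda>a. {a}))"
proof -
  have "fam_iso (DR A R) (Pow A \<times> Pow A) (set_meet mt) mB"
    using cartesian_with_unique(2)[OF uniform_preorder_DR[OF up] cartesian_with_DR assms]
    by (simp add: map_iso_eq_fam_iso)
  moreover have "maps_into (map_prod (\<lambda>a. {a}) (\<lambda>a. {a})) (A \<times> A) (Pow A \<times> Pow A)"
    unfolding maps_into_def by auto
  ultimately have "fam_iso (DR A R) (A \<times> A)
      (set_meet mt \<circ> map_prod (\<lambda>a. {a}) (\<lambda>a. {a})) (mB \<circ> map_prod (\<lambda>a. {a}) (\<lambda>a. {a}))"
    by (intro fam_iso_comp[OF uniform_preorder_DR[OF up]])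
  moreover have "set_meet mt \<circ> map_prod (\<lambda>a. {a}) (\<lambda>a. {a}) = (\<lambda>a. {a}) \<circ> mt"
    by (auto simp: set_meet_singletons)
  ultimately show ?thesis
    by (simp add: map_iso_eq_fam_iso)
qed

end

lemma cartesian_DR: "cartesian A R \<Longrightarrow> cartesian (Pow A) (DR A R)"
  unfolding cartesian_def using uniform_preorder_DR cartesian_with_DR by blast

lemma cartesian_mor_singleton:
  assumes "cartesian A R"
  shows "cartesian_mor A R (Pow A) (DR A R) (\<lambda>a. {a})"
  unfolding cartesian_mor_def
  using assms cartesian_DR[OF assms] monotone_map_singleton singleton_preserves_top singleton_preserves_meet
  unfolding cartesian_def by blast

section \<open>fam(D(A,R)) is an indexed frame\<close>

definition fibre_Union :: "'j set \<Rightarrow> ('j \<Rightarrow> 'i) \<Rightarrow> ('j \<Rightarrow> 'a set) \<Rightarrow> 'i \<Rightarrow> 'a set" where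
  "fibre_Union J u \<psi> i = (\<Union>j\<in>{j \<in> J. u j = i}. \<psi> j)"

lemma set_meet_fibre_Union:
  "set_meet mt (\<phi> i, fibre_Union J u \<psi> i) = fibre_Union J u (\<lambda>j. set_meet mt (\<phi> (u j), \<psi> j)) i"
  unfolding set_meet_def fibre_Union_def by auto

lemma fibre_Union_pullback:
  assumes p: "maps_into p P J" and comm: "\<forall>x\<in>P. u (p x) = v (q x)"
    and surj: "{(j, k). j \<in> J \<and> k \<in> K \<and> u j = v k} \<subseteq> (\<lambda>x. (p x, q x)) ` P"
    and k: "k \<in> K"
  shows "fibre_Union J u \<psi> (v k) = fibre_Union P q (\<psi> \<circ> p) k"
proof
  show "fibre_Union J u \<psi> (v k) \<subseteq> fibre_Union P q (\<psi> \<circ> p) k"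
  proof
    fix y assume "y \<in> fibre_Union J u \<psi> (v k)"
    then obtain j where "j \<in> J" "u j = v k" "y \<in> \<psi> j"
      unfolding fibre_Union_def by blast
    moreover from this obtain x where "x \<in> P" "p x = j" "q x = k"
      using surj k by blast
    ultimately show "y \<in> fibre_Union P q (\<psi> \<circ> p) k"
      unfolding fibre_Union_def by auto
  qed
  show "fibre_Union P q (\<psi> \<circ> p) k \<subseteq> fibre_Union J u \<psi> (v k)"
    using p comm unfolding fibre_Union_def maps_into_def by fastforce
qed

context
  fixes A :: "'a set" and R :: "('a \<times> 'a) set set"
  assumes up: "uniform_preorder A R"
begin

lemma is_fam_exists_fibre_Union:
  assumes u: "maps_into u J I" and \<psi>: "fam_el (Pow A) J \<psi>"
  shows "is_fam_exists (Pow A) (DR A R) J I u \<psi> (fibre_Union J u \<psi>)"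
  unfolding is_fam_exists_def
proof (intro conjI allI impI)
  show "fam_el (Pow A) I (fibre_Union J u \<psi>)"
    using \<psi> unfolding fam_el_def fibre_Union_def by blast
  fix \<phi> assume \<phi>: "fam_el (Pow A) I \<phi>"
  have "(\<forall>i\<in>I. (fibre_Union J u \<psi> i, \<phi> i) \<in> lift_rel A r) \<longleftrightarrow> (\<forall>j\<in>J. (\<psi> j, \<phi> (u j)) \<in> lift_rel A r)"
    for r
    using u \<psi> \<phi> unfolding lift_rel_def fibre_Union_def fam_el_def maps_into_def by blast
  then show "fam_le (DR A R) I (fibre_Union J u \<psi>) \<phi> \<longleftrightarrow> fam_le (DR A R) J \<psi> (\<phi> \<circ> u)"
    unfolding fam_le_DR_iff by simp
qed

lemma beck_chevalley_DR:
  assumes u: "maps_into u J I" and v: "maps_into v K I" and p: "maps_into p P J"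
    and q: "maps_into q P K" and comm: "\<forall>x\<in>P. u (p x) = v (q x)"
    and surj: "{(j, k). j \<in> J \<and> k \<in> K \<and> u j = v k} \<subseteq> (\<lambda>x. (p x, q x)) ` P"
    and \<psi>: "fam_el (Pow A) J \<psi>"
    and e: "is_fam_exists (Pow A) (DR A R) J I u \<psi> e"
    and e': "is_fam_exists (Pow A) (DR A R) P K q (\<psi> \<circ> p) e'"
  shows "fam_iso (DR A R) K (e \<circ> v) e'"
proof -
  note upD = uniform_preorder_DR[OF up]
  note [trans] = fam_iso_trans[OF upD]
  have \<psi>p: "fam_el (Pow A) P (\<psi> \<circ> p)"
    by (rule fam_el_comp[OF p \<psi>])
  have E: "is_fam_exists (Pow A) (DR A R) J I u \<psi> (fibre_Union J u \<psi>)"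
    by (rule is_fam_exists_fibre_Union[OF u \<psi>])
  have "fam_iso (DR A R) K (e \<circ> v) (fibre_Union J u \<psi> \<circ> v)"
    using fam_iso_comp[OF upD v is_fam_exists_cong[OF upD fam_iso_refl[OF upD \<psi>] e E]] .
  also have "fam_iso (DR A R) K \<dots> (fibre_Union P q (\<psi> \<circ> p))"
  proof (rule fam_iso_if_eq_on[OF upD])
    show "fam_el (Pow A) K (fibre_Union J u \<psi> \<circ> v)"
      using E fam_el_comp[OF v] unfolding is_fam_exists_def by blast
  qed (simp add: fibre_Union_pullback[OF p comm surj])
  also have "fam_iso (DR A R) K \<dots> e'"
    by (rule is_fam_exists_cong[OF upD fam_iso_refl[OF upD \<psi>p] is_fam_exists_fibre_Union[OF q \<psi>p] e'])
  finally show ?thesis .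
qed

lemma frobenius_DR:
  assumes cw: "cartesian_with A R tp mt"
    and u: "maps_into u J I" and \<phi>: "fam_el (Pow A) I \<phi>" and \<psi>: "fam_el (Pow A) J \<psi>"
    and e: "is_fam_exists (Pow A) (DR A R) J I u \<psi> e"
    and m: "is_fam_meet (Pow A) (DR A R) I \<phi> e m"
    and m': "is_fam_meet (Pow A) (DR A R) J (\<phi> \<circ> u) \<psi> m'"
    and e': "is_fam_exists (Pow A) (DR A R) J I u m' e'"
  shows "fam_iso (DR A R) I m e'"
proof -
  note upD = uniform_preorder_DR[OF up] and cwD = cartesian_with_DR[OF up cw]
  note [trans] = fam_iso_trans[OF upD]
  let ?E = "fibre_Union J u \<psi>"
  let ?M' = "\<lambda>j. set_meet mt ((\<phi> \<circ> u) j, \<psi> j)"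
  have E: "is_fam_exists (Pow A) (DR A R) J I u \<psi> ?E"
    by (rule is_fam_exists_fibre_Union[OF u \<psi>])
  then have "fam_el (Pow A) I ?E"
    unfolding is_fam_exists_def by blast
  have M': "is_fam_meet (Pow A) (DR A R) J (\<phi> \<circ> u) \<psi> ?M'"
    by (rule is_fam_meet_pointwise[OF upD cwD fam_el_comp[OF u \<phi>] \<psi>])
  then have "fam_el (Pow A) J ?M'"
    unfolding is_fam_meet_def by blast
  have "fam_iso (DR A R) I m (\<lambda>i. set_meet mt (\<phi> i, ?E i))"
    using is_fam_meet_cong[OF upD is_fam_exists_cong[OF upD fam_iso_refl[OF upD \<psi>] e E] m
        is_fam_meet_pointwise[OF upD cwD \<phi> \<open>fam_el (Pow A) I ?E\<close>]] .
  also have "(\<lambda>i. set_meet mt (\<phi> i, ?E i)) = fibre_Union J u ?M'"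
    by (simp add: set_meet_fibre_Union)
  also have "fam_iso (DR A R) I \<dots> e'"
    by (rule is_fam_exists_cong[OF upD is_fam_meet_unique[OF M' m']
          is_fam_exists_fibre_Union[OF u \<open>fam_el (Pow A) J ?M'\<close>] e'])
  finally show ?thesis .
qed

lemma fam_indexed_frame_DR:
  assumes cw: "cartesian_with A R tp mt"
  shows "fam_indexed_frame (Pow A) (DR A R) TYPE('i) TYPE('j) TYPE('k) TYPE('p)"
  unfolding fam_indexed_frame_def
proof (intro conjI allI impI)
  note upD = uniform_preorder_DR[OF up] and cwD = cartesian_with_DR[OF up cw]
  fix I :: "'i set"
  show "\<exists>t. is_fam_top (Pow A) (DR A R) I t"
    using is_fam_top_const[OF upD cwD] by blast
  show "\<exists>m. is_fam_meet (Pow A) (DR A R) I \<phi> \<psi> m"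
    if "fam_el (Pow A) I \<phi> \<and> fam_el (Pow A) I \<psi>" for \<phi> \<psi>
    using that is_fam_meet_pointwise[OF upD cwD] by blast
  fix J :: "'j set" and u
  show "is_fam_top (Pow A) (DR A R) J (t \<circ> u)"
    if "maps_into u J I" and "is_fam_top (Pow A) (DR A R) I t" for t
    using is_fam_top_comp[OF upD cwD that] .
  show "is_fam_meet (Pow A) (DR A R) J (\<phi> \<circ> u) (\<psi> \<circ> u) (m \<circ> u)"
    if "maps_into u J I"
      and "fam_el (Pow A) I \<phi> \<and> fam_el (Pow A) I \<psi> \<and> is_fam_meet (Pow A) (DR A R) I \<phi> \<psi> m"
    for \<phi> \<psi> m
    using that is_fam_meet_comp[OF upD cwD] by blast
  show "\<exists>e. is_fam_exists (Pow A) (DR A R) J I u \<psi> e"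
    if "maps_into u J I \<and> fam_el (Pow A) J \<psi>" for \<psi>
    using that is_fam_exists_fibre_Union by blast
  show "fam_iso (DR A R) I m e'"
    if "maps_into u J I \<and> fam_el (Pow A) I \<phi> \<and> fam_el (Pow A) J \<psi> \<and>
        is_fam_exists (Pow A) (DR A R) J I u \<psi> e \<and> is_fam_meet (Pow A) (DR A R) I \<phi> e m \<and>
        is_fam_meet (Pow A) (DR A R) J (\<phi> \<circ> u) \<psi> m' \<and> is_fam_exists (Pow A) (DR A R) J I u m' e'"
    for \<phi> \<psi> e m m' e'
    using that frobenius_DR[OF cw] by blast
next
  fix I :: "'i set" and J :: "'j set" and K :: "'k set" and P :: "'p set" and u v p q \<psi> e e'
  assume "maps_into u J I \<and> maps_into v K I \<and> maps_into p P J \<and> maps_into q P K \<and>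
      (\<forall>x\<in>P. u (p x) = v (q x)) \<and>
      bij_betw (\<lambda>x. (p x, q x)) P {(j, k). j \<in> J \<and> k \<in> K \<and> u j = v k}"
    and "fam_el (Pow A) J \<psi> \<and> is_fam_exists (Pow A) (DR A R) J I u \<psi> e \<and>
      is_fam_exists (Pow A) (DR A R) P K q (\<psi> \<circ> p) e'"
  then show "fam_iso (DR A R) K (e \<circ> v) e'"
    by (elim conjE) (erule beck_chevalley_DR; simp add: bij_betw_def)
qed

end

theorem proposition5p3:
  fixes A :: "'a set" and R :: "('a \<times> 'a) set set"
  assumes "cartesian A R"
  shows "cartesian (Pow A) (DR A R) \<and>
         cartesian_mor A R (Pow A) (DR A R) (\<lambda>a. {a}) \<and>
         fam_indexed_frame (Pow A) (DR A R) TYPE('i) TYPE('j) TYPE('k) TYPE('p)"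
proof -
  obtain tp mt where "uniform_preorder A R" and "cartesian_with A R tp mt"
    using assms unfolding cartesian_def by blast
  then show ?thesis
    using cartesian_DR[OF assms] cartesian_mor_singleton[OF assms] fam_indexed_frame_DR by blast
qed

end
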